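(* Let $V$ be a finite set and $d:V\times V\to\mathbb{R}_{\ge0}$ a semi-metric (symmetric, $d(i,i)=0$). Let $s\ge1$ be such that $d(i,j)\le s\,(d(i,k)+d(k,j))$ for all $i,j,k\in V$. Let $\pi:V\to\mathbb{R}_+$ with $\pi(V)=1$ and suppose $\sum_{i,j\in V}\pi(i)\pi(j)d(i,j)=2$. Let $L\subseteq V$ be nonempty with $\mathrm{diam}(L)=\max_{i,j\in L}d(i,j)$. Then $$\sum_{i\notin L}\pi(i)\,d(i,L)\ge\frac{1}{s^2}-\frac12\,\mathrm{diam}(L).$$
   Context: $d(i,L)=\min_{j\in L}d(i,j)$; $\pi(A)=\sum_{i\in A}\pi(i)$. *)

theory Defs
  imports Complex_Main
begin

definition dist_set :: "('a \<Rightarrow> 'a \<Rightarrow> real) \<Rightarrow> 'a \<Rightarrow> 'a set \<Rightarrow> real" where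
  "dist_set d i L = Min ((\<lambda>j. d i j) ` L)"

definition diam_set :: "('a \<Rightarrow> 'a \<Rightarrow> real) \<Rightarrow> 'a set \<Rightarrow> real" where
  "diam_set d L = Max ((\<lambda>(i,j). d i j) ` (L \<times> L))"

end

theory Submission
  imports Defs
begin

text \<open>Pick nearest points \<open>l\<^sub>i, l\<^sub>j \<in> L\<close> of \<open>i\<close> and \<open>j\<close>. Two applications of the relaxed
  triangle inequality, along \<open>i \<rightarrow> l\<^sub>i \<rightarrow> l\<^sub>j \<rightarrow> j\<close>, give
  \<open>d(i,j) \<le> s\<^sup>2 (d(i,L) + d(j,L) + diam L)\<close>. Averaging this over \<open>\<pi> \<otimes> \<pi>\<close> yields
  \<open>2 \<le> s\<^sup>2 (2 \<Sum>\<^sub>i \<pi>(i) d(i,L) + diam L)\<close>, and the terms with \<open>i \<in> L\<close> vanish.\<close>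

lemma dist_set_attained:
  assumes "finite L" "L \<noteq> {}"
  obtains l where "l \<in> L" "d i l = dist_set d i L"
proof -
  have "Min ((\<lambda>j. d i j) ` L) \<in> (\<lambda>j. d i j) ` L"
    using assms by (intro Min_in) auto
  then show ?thesis using that unfolding dist_set_def by auto
qed

lemma dist_set_le:
  assumes "finite L" "l \<in> L"
  shows "dist_set d i L \<le> d i l"
  unfolding dist_set_def using assms by (intro Min_le) auto

lemma dist_set_nonneg:
  assumes "finite L" "L \<noteq> {}" "\<forall>l\<in>L. d i l \<ge> 0"
  shows "dist_set d i L \<ge> 0"
  using assms by (metis dist_set_attained)

lemma dist_set_self:
  assumes "finite L" "i \<in> L" "d i i = 0" "\<forall>l\<in>L. d i l \<ge> 0"
  shows "dist_set d i L = 0"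
  using dist_set_le[OF assms(1,2), of d i] dist_set_nonneg[of L d i] assms by auto

lemma diam_set_ge:
  assumes "finite L" "a \<in> L" "b \<in> L"
  shows "d a b \<le> diam_set d L"
proof -
  have "(\<lambda>(i,j). d i j) (a,b) \<le> Max ((\<lambda>(i,j). d i j) ` (L \<times> L))"
    using assms by (intro Max_ge) auto
  then show ?thesis unfolding diam_set_def by simp
qed

lemma relaxed_triangle_through_set:
  assumes "finite L" "L \<noteq> {}" "L \<subseteq> V" "i \<in> V" "j \<in> V" "s \<ge> 1"
    and nonneg: "\<forall>i\<in>V. \<forall>j\<in>V. d i j \<ge> 0"
    and sym: "\<forall>i\<in>V. \<forall>j\<in>V. d i j = d j i"
    and relaxed_tri: "\<forall>i\<in>V. \<forall>j\<in>V. \<forall>k\<in>V. d i j \<le> s * (d i k + d k j)"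
  shows "d i j \<le> s\<^sup>2 * (dist_set d i L + dist_set d j L + diam_set d L)"
proof -
  obtain li where li: "li \<in> L" "d i li = dist_set d i L"
    using dist_set_attained[OF assms(1,2)] .
  obtain lj where lj: "lj \<in> L" "d j lj = dist_set d j L"
    using dist_set_attained[OF assms(1,2)] .
  have liV: "li \<in> V" and ljV: "lj \<in> V" using li lj assms(3) by auto
  have "d li j \<le> s * (d li lj + d lj j)"
    using relaxed_tri liV ljV \<open>j \<in> V\<close> by blast
  also have "\<dots> \<le> s * (diam_set d L + dist_set d j L)"
    using diam_set_ge[OF assms(1) li(1) lj(1)] lj sym ljV \<open>j \<in> V\<close> \<open>s \<ge> 1\<close> by auto
  finally have far: "d li j \<le> s * (diam_set d L + dist_set d j L)" .
  have "d i j \<le> s * (d i li + d li j)"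
    using relaxed_tri liV \<open>i \<in> V\<close> \<open>j \<in> V\<close> by blast
  also have "\<dots> \<le> s * dist_set d i L + s * (s * (diam_set d L + dist_set d j L))"
    using mult_left_mono[OF far] li(2) \<open>s \<ge> 1\<close> by (simp add: distrib_left)
  also have "s * dist_set d i L \<le> s\<^sup>2 * dist_set d i L"
    using \<open>s \<ge> 1\<close> nonneg li(1) liV \<open>i \<in> V\<close> unfolding li(2)[symmetric]
    by (intro mult_right_mono) (auto simp: power2_eq_square)
  finally show ?thesis by (simp add: algebra_simps power2_eq_square)
qed

lemma double_sum_prob_weights:
  fixes \<pi> f :: "'a \<Rightarrow> real"
  assumes "(\<Sum>i\<in>V. \<pi> i) = 1"
  shows "(\<Sum>i\<in>V. \<Sum>j\<in>V. \<pi> i * \<pi> j * (f i + f j + c)) = 2 * (\<Sum>i\<in>V. \<pi> i * f i) + c"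
proof -
  have row: "(\<Sum>j\<in>V. \<pi> i * \<pi> j * (f i + f j + c))
      = \<pi> i * f i + \<pi> i * c + \<pi> i * (\<Sum>j\<in>V. \<pi> j * f j)" for i
  proof -
    have "(\<Sum>j\<in>V. \<pi> i * \<pi> j * (f i + f j + c))
        = \<pi> i * (f i + c) * (\<Sum>j\<in>V. \<pi> j) + \<pi> i * (\<Sum>j\<in>V. \<pi> j * f j)"
      by (simp add: sum_distrib_left sum.distrib algebra_simps)
    then show ?thesis using assms by (simp add: algebra_simps)
  qed
  have "(\<Sum>i\<in>V. \<Sum>j\<in>V. \<pi> i * \<pi> j * (f i + f j + c))
      = (\<Sum>i\<in>V. \<pi> i * f i) + (\<Sum>i\<in>V. \<pi> i) * c + (\<Sum>i\<in>V. \<pi> i) * (\<Sum>j\<in>V. \<pi> j * f j)"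
    unfolding row by (simp add: sum.distrib sum_distrib_right)
  then show ?thesis using assms by simp
qed

theorem mainTheorem10:
  fixes V :: "'a set" and d :: "'a \<Rightarrow> 'a \<Rightarrow> real" and \<pi> :: "'a \<Rightarrow> real"
    and s :: real and L :: "'a set"
  assumes finV: "finite V"
    and nonneg: "\<forall>i\<in>V. \<forall>j\<in>V. d i j \<ge> 0"
    and sym: "\<forall>i\<in>V. \<forall>j\<in>V. d i j = d j i"
    and refl: "\<forall>i\<in>V. d i i = 0"
    and s_ge: "s \<ge> 1"
    and relaxed_tri: "\<forall>i\<in>V. \<forall>j\<in>V. \<forall>k\<in>V. d i j \<le> s * (d i k + d k j)"
    and pi_pos: "\<forall>i\<in>V. \<pi> i > 0"
    and pi_sum: "(\<Sum>i\<in>V. \<pi> i) = 1"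
    and avg: "(\<Sum>i\<in>V. \<Sum>j\<in>V. \<pi> i * \<pi> j * d i j) = 2"
    and L_sub: "L \<subseteq> V"
    and L_ne: "L \<noteq> {}"
  shows "(\<Sum>i\<in>V - L. \<pi> i * dist_set d i L) \<ge> 1 / s^2 - diam_set d L / 2"
proof -
  define f where "f i = dist_set d i L" for i
  define D where "D = diam_set d L"
  have finL: "finite L" using finV L_sub finite_subset by blast
  have "2 \<le> (\<Sum>i\<in>V. \<Sum>j\<in>V. \<pi> i * \<pi> j * (s\<^sup>2 * (f i + f j + D)))"
    unfolding avg[symmetric] f_def D_def
    using relaxed_triangle_through_set[OF finL L_ne L_sub _ _ s_ge nonneg sym relaxed_tri] pi_pos
    by (intro sum_mono mult_left_mono) (auto intro: less_imp_le)
  also have "\<dots> = s\<^sup>2 * (\<Sum>i\<in>V. \<Sum>j\<in>V. \<pi> i * \<pi> j * (f i + f j + D))"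
    by (simp add: sum_distrib_left mult.left_commute)
  also have "\<dots> = s\<^sup>2 * (2 * (\<Sum>i\<in>V. \<pi> i * f i) + D)"
    by (simp add: double_sum_prob_weights[OF pi_sum])
  also have "(\<Sum>i\<in>V. \<pi> i * f i) = (\<Sum>i\<in>V - L. \<pi> i * f i)"
    using finV L_sub finL refl nonneg
    by (intro sum.mono_neutral_right) (auto simp: f_def intro!: dist_set_self)
  finally have "2 \<le> s\<^sup>2 * (2 * (\<Sum>i\<in>V - L. \<pi> i * f i) + D)" .
  then show ?thesis using s_ge unfolding f_def D_def by (simp add: field_simps)
qed

end
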